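(* (Principal specialization.) Let $0\le m\le n$, $x=(x_1,\dots,x_m)$, and let $y=(1,t,\dots,t^{n-1})$. Then \[F(t^{n-m+1};x,y;t)=\prod_{i=1}^m\frac{1-t^{i+n-m}}{1-t^nx_i}\quad\text{and}\quad F(1;x,y;t)=t^{\binom m2}x_1\cdots x_m\prod_{i=1}^m\frac{1-t^{i+n-m}}{1-t^nx_i}.\]
   Context: For $x=(x_1,\dots,x_m)$, $y=(y_1,\dots,y_n)$, \[F(u;x,y;t)=\sum_{I\subseteq\{1,\dots,m\}}(-u)^{|I|}t^{\binom{|I|}{2}}\prod_{i\in I,\ j\in\{1,\dots,m\}\setminus I}\frac{tx_i-x_j}{x_i-x_j}\prod_{i\in I}\prod_{j=1}^n\frac{1-x_iy_j}{1-tx_iy_j}.\] *)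

theory Defs
  imports Main
begin

definition F :: "'a::field \<Rightarrow> nat \<Rightarrow> (nat \<Rightarrow> 'a) \<Rightarrow> nat \<Rightarrow> (nat \<Rightarrow> 'a) \<Rightarrow> 'a \<Rightarrow> 'a" where
  "F u m x n y t =
     (\<Sum>I\<in>Pow {1..m}. (- u) ^ card I * t ^ (card I choose 2)
        * (\<Prod>i\<in>I. \<Prod>j\<in>{1..m} - I. (t * x i - x j) / (x i - x j))
        * (\<Prod>i\<in>I. \<Prod>j\<in>{1..n}. (1 - x i * y j) / (1 - t * x i * y j)))"

end

theory Submission
  imports Defs "HOL-Computational_Algebra.Polynomial"
begin

text \<open>With \<open>y = (1, t, \<dots>, t^(n-1))\<close> the product over \<open>j\<close> in \<open>F\<close> telescopes to
  \<open>(1 - x i) / (1 - t^n x i)\<close>, so \<open>F\<close> times \<open>\<Prod>i. 1 - t^n x i\<close> is a denominator-free sum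
  \<open>G(u, q; x)\<close> at \<open>q = t^n\<close>. As a function of a single variable \<open>x k = z\<close>, \<open>G\<close> is affine:
  multiplied by \<open>\<Prod>j\<noteq>k. z - x j\<close> it becomes a polynomial of degree at most \<open>m\<close>
  whose values at the \<open>x j\<close> vanish, because the residues of the terms for \<open>I\<close> and
  \<open>I \<union> {j}\<close> cancel. Reading off its top coefficient and its value at \<open>z = 0\<close> gives
  \<open>G(u, q; x) = (u t^(m-1) - q) G(u, q; x') x k + (1 - u) G(u t, q; x')\<close>, with \<open>x'\<close> the
  remaining variables. For \<open>q = u t^(m-1)\<close> the first term drops out and for \<open>u = 1\<close> the
  second one does, and induction on \<open>m\<close> yields the two product formulas.\<close>

lemma sum_Pow_insert:
  assumes "finite S" "k \<notin> S"
  shows "(\<Sum>J\<in>Pow (insert k S). f J) = (\<Sum>J\<in>Pow S. f J + f (insert k J))"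
proof -
  have "inj_on (insert k) (Pow S)"
    using assms(2) by (intro inj_onI) (metis PowD Diff_insert_absorb in_mono)
  moreover have "Pow S \<inter> insert k ` Pow S = {}"
    using assms(2) by auto
  ultimately show ?thesis
    using assms(1) by (simp add: Pow_insert sum.union_disjoint sum.reindex sum.distrib)
qed

definition cross_factor :: "nat set \<Rightarrow> nat set \<Rightarrow> (nat \<Rightarrow> 'a::field) \<Rightarrow> 'a \<Rightarrow> 'a" where
  "cross_factor S I x t = (\<Prod>i\<in>I. \<Prod>j\<in>S - I. (t * x i - x j) / (x i - x j))"

definition cleared_term :: "'a::field \<Rightarrow> 'a \<Rightarrow> nat set \<Rightarrow> nat set \<Rightarrow> (nat \<Rightarrow> 'a) \<Rightarrow> 'a \<Rightarrow> 'a" where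
  "cleared_term u q S I x t = (- u) ^ card I * t ^ (card I choose 2) * cross_factor S I x t
     * (\<Prod>i\<in>I. 1 - x i) * (\<Prod>i\<in>S - I. 1 - q * x i)"

text \<open>The sum \<open>G(u, q; x)\<close> above, where \<open>q\<close> stands for \<open>t^n\<close>.\<close>

definition cleared_sum :: "'a::field \<Rightarrow> 'a \<Rightarrow> nat set \<Rightarrow> (nat \<Rightarrow> 'a) \<Rightarrow> 'a \<Rightarrow> 'a" where
  "cleared_sum u q S x t = (\<Sum>I\<in>Pow S. cleared_term u q S I x t)"

lemma cleared_sum_empty [simp]: "cleared_sum u q {} x t = 1"
  by (simp add: cleared_sum_def cleared_term_def cross_factor_def numeral_2_eq_2)

lemma cleared_term_cong:
  assumes "I \<subseteq> S" "\<And>i. i \<in> S \<Longrightarrow> x i = x' i"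
  shows "cleared_term u q S I x t = cleared_term u q S I x' t"
  unfolding cleared_term_def cross_factor_def using assms
  by (intro arg_cong2[where f = "(*)"] prod.cong refl) auto

lemma cleared_sum_cong:
  assumes "\<And>i. i \<in> S \<Longrightarrow> x i = x' i"
  shows "cleared_sum u q S x t = cleared_sum u q S x' t"
  unfolding cleared_sum_def using assms by (intro sum.cong refl cleared_term_cong) auto

lemma cleared_term_insert_notin:
  assumes "finite S" "k \<notin> S" "J \<subseteq> S"
  shows "cleared_term u q (insert k S) J x t = cleared_term u q S J x t
     * (\<Prod>i\<in>J. (t * x i - x k) / (x i - x k)) * (1 - q * x k)"
proof -
  have diff: "insert k S - J = insert k (S - J)"
    using assms by auto
  have "cross_factor (insert k S) J x t
      = (\<Prod>i\<in>J. (t * x i - x k) / (x i - x k) * (\<Prod>j\<in>S - J. (t * x i - x j) / (x i - x j)))"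
    unfolding cross_factor_def diff using assms by (intro prod.cong refl) simp
  also have "\<dots> = (\<Prod>i\<in>J. (t * x i - x k) / (x i - x k)) * cross_factor S J x t"
    unfolding cross_factor_def by (rule prod.distrib)
  finally have "cross_factor (insert k S) J x t
      = cross_factor S J x t * (\<Prod>i\<in>J. (t * x i - x k) / (x i - x k))"
    by (simp only: mult.commute)
  then show ?thesis
    unfolding cleared_term_def diff using assms by (simp add: ac_simps)
qed

lemma cleared_term_insert_in:
  assumes "finite S" "k \<notin> S" "J \<subseteq> S"
  shows "cleared_term u q (insert k S) (insert k J) x t = cleared_term u q S J x t
     * (- u) * t ^ card J * (\<Prod>j\<in>S - J. (t * x k - x j) / (x k - x j)) * (1 - x k)"
proof -
  have diff: "insert k S - insert k J = S - J"
    using assms by auto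
  have J: "finite J" "k \<notin> J"
    using assms finite_subset by auto
  have "Suc (card J) choose 2 = (card J choose 2) + card J"
    by (cases "card J") (auto simp: choose_two)
  then show ?thesis
    unfolding cleared_term_def cross_factor_def diff using J
    by (simp add: ac_simps power_add)
qed

lemma cleared_sum_insert:
  assumes "finite S" "k \<notin> S"
  shows "cleared_sum u q (insert k S) x t = (\<Sum>J\<in>Pow S. cleared_term u q S J x t *
     ((\<Prod>i\<in>J. (t * x i - x k) / (x i - x k)) * (1 - q * x k)
      + (- u) * t ^ card J * (\<Prod>j\<in>S - J. (t * x k - x j) / (x k - x j)) * (1 - x k)))"
  unfolding cleared_sum_def sum_Pow_insert[OF assms]
  using assms by (intro sum.cong refl) (simp add: cleared_term_insert_in cleared_term_insert_notin algebra_simps)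

lemma cleared_sum_insert_zero:
  assumes "finite S" "k \<notin> S" "\<forall>j\<in>S. x j \<noteq> 0" "x k = 0"
  shows "cleared_sum u q (insert k S) x t = (1 - u) * cleared_sum (u * t) q S x t"
proof -
  have "cleared_term u q S J x t * ((\<Prod>i\<in>J. (t * x i - x k) / (x i - x k)) * (1 - q * x k)
      + (- u) * t ^ card J * (\<Prod>j\<in>S - J. (t * x k - x j) / (x k - x j)) * (1 - x k))
    = (1 - u) * cleared_term (u * t) q S J x t" if J: "J \<subseteq> S" for J
  proof -
    have "(\<Prod>i\<in>J. (t * x i - x k) / (x i - x k)) = t ^ card J"
      using J assms by (simp add: subset_iff)
    moreover have "(\<Prod>j\<in>S - J. (t * x k - x j) / (x k - x j)) = 1"
      using assms by (intro prod.neutral) auto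
    moreover have "cleared_term (u * t) q S J x t = cleared_term u q S J x t * t ^ card J"
      by (simp add: cleared_term_def power_mult_distrib[symmetric] ac_simps)
    ultimately show ?thesis
      using assms by (simp add: algebra_simps)
  qed
  then show ?thesis
    unfolding cleared_sum_insert[OF assms(1,2)] unfolding cleared_sum_def sum_distrib_left
    by (intro sum.cong) auto
qed

lemma prod_cross_ratio_clear_left:
  fixes x :: "nat \<Rightarrow> 'a::field"
  assumes "z \<notin> x ` A"
  shows "(\<Prod>i\<in>A. (t * x i - z) / (x i - z)) * (\<Prod>i\<in>A. z - x i) = (\<Prod>i\<in>A. z - t * x i)"
proof -
  have "x i - z \<noteq> 0" if "i \<in> A" for i
    using assms that by auto
  then show ?thesis
    unfolding prod.distrib[symmetric] by (intro prod.cong refl) (simp add: field_simps)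
qed

lemma prod_cross_ratio_clear_right:
  fixes x :: "nat \<Rightarrow> 'a::field"
  assumes "z \<notin> x ` A"
  shows "(\<Prod>j\<in>A. (t * z - x j) / (z - x j)) * (\<Prod>j\<in>A. z - x j) = (\<Prod>j\<in>A. t * z - x j)"
proof -
  have "z - x j \<noteq> 0" if "j \<in> A" for j
    using assms that by auto
  then show ?thesis
    unfolding prod.distrib[symmetric] by (intro prod.cong refl) (simp add: field_simps)
qed

lemma coeff_mult_at_degree_bounds:
  fixes p q :: "'a::comm_semiring_0 poly"
  assumes "degree p \<le> a" "degree q \<le> b"
  shows "coeff (p * q) (a + b) = coeff p a * coeff q b"
proof (cases "degree p = a \<and> degree q = b")
  case True
  then show ?thesis using coeff_mult_degree_sum[of p q] by simp
next
  case False
  then have "degree (p * q) < a + b"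
    using assms degree_mult_le[of p q] by linarith
  then show ?thesis
    using False assms by (auto simp: coeff_eq_0 le_less)
qed

lemma degree_prod_le_card:
  fixes f :: "'b \<Rightarrow> 'a::comm_semiring_1 poly"
  assumes "\<forall>a\<in>A. degree (f a) \<le> 1"
  shows "degree (prod f A) \<le> card A"
proof (cases "finite A")
  case True
  then have "degree (prod f A) \<le> (\<Sum>a\<in>A. degree (f a))"
    using degree_prod_sum_le by (metis comp_apply sum.cong)
  also have "\<dots> \<le> card A"
    using assms sum_bounded_above[of A "\<lambda>a. degree (f a)" 1] by simp
  finally show ?thesis .
qed simp

lemma coeff_prod_card:
  fixes f :: "'b \<Rightarrow> 'a::comm_semiring_1 poly"
  assumes "\<forall>a\<in>A. degree (f a) \<le> 1"
  shows "coeff (prod f A) (card A) = (\<Prod>a\<in>A. coeff (f a) 1)"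
  using assms
proof (induction A rule: infinite_finite_induct)
  case (insert a A)
  then have "coeff (f a * prod f A) (1 + card A) = coeff (f a) 1 * coeff (prod f A) (card A)"
    by (intro coeff_mult_at_degree_bounds degree_prod_le_card) auto
  then show ?case
    using insert by simp
qed simp_all

lemma degree_coeff_prod_linear_split:
  fixes f g :: "'b \<Rightarrow> 'a::comm_semiring_1 poly"
  assumes "finite S" "J \<subseteq> S" "\<forall>i\<in>J. degree (f i) \<le> 1" "\<forall>i\<in>S - J. degree (g i) \<le> 1"
  shows "degree ((\<Prod>i\<in>J. f i) * (\<Prod>i\<in>S - J. g i)) \<le> card S"
    and "coeff ((\<Prod>i\<in>J. f i) * (\<Prod>i\<in>S - J. g i)) (card S)
           = (\<Prod>i\<in>J. coeff (f i) 1) * (\<Prod>i\<in>S - J. coeff (g i) 1)"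
proof -
  have card: "card S = card J + card (S - J)"
    using assms(1,2) by (simp add: card_Diff_subset card_mono finite_subset)
  have deg: "degree (\<Prod>i\<in>J. f i) \<le> card J" "degree (\<Prod>i\<in>S - J. g i) \<le> card (S - J)"
    using assms(3,4) by (simp_all add: degree_prod_le_card)
  then show "degree ((\<Prod>i\<in>J. f i) * (\<Prod>i\<in>S - J. g i)) \<le> card S"
    unfolding card using degree_mult_le[of "\<Prod>i\<in>J. f i" "\<Prod>i\<in>S - J. g i"] by linarith
  show "coeff ((\<Prod>i\<in>J. f i) * (\<Prod>i\<in>S - J. g i)) (card S)
          = (\<Prod>i\<in>J. coeff (f i) 1) * (\<Prod>i\<in>S - J. coeff (g i) 1)"
    unfolding card coeff_mult_at_degree_bounds[OF deg] using assms(3,4) by (simp add: coeff_prod_card)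
qed

definition vanishing_poly :: "nat set \<Rightarrow> (nat \<Rightarrow> 'a::comm_ring_1) \<Rightarrow> 'a poly" where
  "vanishing_poly S x = (\<Prod>j\<in>S. [:- x j, 1:])"

lemma poly_vanishing_poly: "poly (vanishing_poly S x) z = (\<Prod>j\<in>S. z - x j)"
  by (simp add: vanishing_poly_def poly_prod)

lemma vanishing_poly_nonzero:
  fixes x :: "nat \<Rightarrow> 'a::idom"
  assumes "finite S" "z \<notin> x ` S"
  shows "poly (vanishing_poly S x) z \<noteq> 0"
  using assms by (auto simp: poly_vanishing_poly)

lemma degree_vanishing_poly: "degree (vanishing_poly S x) \<le> card S"
  unfolding vanishing_poly_def by (rule degree_prod_le_card) simp

lemma coeff_vanishing_poly: "coeff (vanishing_poly S x) (card S) = 1"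
  unfolding vanishing_poly_def by (subst coeff_prod_card) simp_all

lemma poly_eq_vanishing_poly_mult_affine:
  fixes P :: "'a::field poly"
  assumes S: "finite S" "inj_on x S" "0 \<notin> x ` S"
    and P: "degree P \<le> card S + 1" "\<forall>j\<in>S. poly P (x j) = 0"
  shows "poly P z = poly (vanishing_poly S x) z
           * (coeff P (card S + 1) * z + poly P 0 / poly (vanishing_poly S x) 0)"
proof -
  define V where "V = vanishing_poly S x"
  define Q where "Q = V * [:poly P 0 / poly V 0, coeff P (card S + 1):]"
  have V0: "poly V 0 \<noteq> 0"
    unfolding V_def using S by (intro vanishing_poly_nonzero) auto
  have "P = Q"
  proof (rule poly_eqI_degree_lead_coeff[where n = "card S + 1" and A = "insert 0 (x ` S)"])
    show "coeff P (card S + 1) = coeff Q (card S + 1)"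
      unfolding Q_def V_def
      by (subst coeff_mult_at_degree_bounds[OF degree_vanishing_poly]) (simp_all add: coeff_vanishing_poly)
    show "card S + 1 \<le> card (insert 0 (x ` S))"
      using S by (simp add: card_image)
    show "degree Q \<le> card S + 1"
    proof -
      have "degree [:poly P 0 / poly V 0, coeff P (card S + 1):] \<le> 1"
        by simp
      then show ?thesis
        unfolding Q_def using degree_mult_le[of V "[:poly P 0 / poly V 0, coeff P (card S + 1):]"]
          degree_vanishing_poly[of S x, folded V_def] by linarith
    qed
    have "poly V (x j) = 0" if "j \<in> S" for j
      using that S(1) by (auto simp: V_def poly_vanishing_poly)
    moreover fix w assume "w \<in> insert 0 (x ` S)"
    ultimately show "poly P w = poly Q w"
      using P V0 by (auto simp: Q_def)
  qed (use P in simp)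
  then have "poly P z = poly V z * poly [:poly P 0 / poly V 0, coeff P (card S + 1):] z"
    by (metis Q_def poly_mult)
  then show ?thesis
    by (simp add: V_def algebra_simps)
qed

text \<open>The numerator of \<open>cleared_sum u q (insert k S) (x(k := z)) t\<close> as a rational function
  of \<open>z\<close>, see \<open>poly_insertion_numerator_eq\<close>.\<close>

definition insertion_summand :: "'a::field \<Rightarrow> 'a \<Rightarrow> nat set \<Rightarrow> nat set \<Rightarrow> (nat \<Rightarrow> 'a) \<Rightarrow> 'a \<Rightarrow> 'a poly"
  where "insertion_summand u q S J x t =
    (\<Prod>i\<in>J. [:- (t * x i), 1:]) * (\<Prod>j\<in>S - J. [:- x j, 1:]) * [:1, - q:]
    - smult (u * t ^ card J) ((\<Prod>j\<in>S - J. [:- x j, t:]) * (\<Prod>i\<in>J. [:- x i, 1:]) * [:1, - 1:])"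

definition insertion_numerator :: "'a::field \<Rightarrow> 'a \<Rightarrow> nat set \<Rightarrow> (nat \<Rightarrow> 'a) \<Rightarrow> 'a \<Rightarrow> 'a poly" where
  "insertion_numerator u q S x t =
    (\<Sum>J\<in>Pow S. smult (cleared_term u q S J x t) (insertion_summand u q S J x t))"

lemma poly_insertion_numerator:
  "poly (insertion_numerator u q S x t) z = (\<Sum>J\<in>Pow S. cleared_term u q S J x t *
     ((\<Prod>i\<in>J. z - t * x i) * (\<Prod>j\<in>S - J. z - x j) * (1 - q * z)
      - u * t ^ card J * (\<Prod>j\<in>S - J. t * z - x j) * (\<Prod>i\<in>J. z - x i) * (1 - z)))"
  by (simp add: insertion_numerator_def insertion_summand_def poly_sum poly_prod algebra_simps)

lemma poly_insertion_numerator_eq: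
  assumes "finite S" "k \<notin> S" "z \<notin> x ` S"
  shows "poly (insertion_numerator u q S x t) z
           = poly (vanishing_poly S x) z * cleared_sum u q (insert k S) (x(k := z)) t"
proof -
  have expand: "cleared_sum u q (insert k S) (x(k := z)) t = (\<Sum>J\<in>Pow S. cleared_term u q S J x t *
     ((\<Prod>i\<in>J. (t * x i - z) / (x i - z)) * (1 - q * z)
      + (- u) * t ^ card J * (\<Prod>j\<in>S - J. (t * z - x j) / (z - x j)) * (1 - z)))"
    unfolding cleared_sum_insert[OF assms(1,2)] using assms(2)
    by (intro sum.cong refl arg_cong2[where f = "(*)"] cleared_term_cong arg_cong2[where f = "(+)"]
        prod.cong) auto
  have summand: "cleared_term u q S J x t *
      ((\<Prod>i\<in>J. z - t * x i) * (\<Prod>j\<in>S - J. z - x j) * (1 - q * z)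
       - u * t ^ card J * (\<Prod>j\<in>S - J. t * z - x j) * (\<Prod>i\<in>J. z - x i) * (1 - z))
    = poly (vanishing_poly S x) z * (cleared_term u q S J x t *
      ((\<Prod>i\<in>J. (t * x i - z) / (x i - z)) * (1 - q * z)
       + (- u) * t ^ card J * (\<Prod>j\<in>S - J. (t * z - x j) / (z - x j)) * (1 - z)))"
    if J: "J \<subseteq> S" for J
  proof -
    have V: "poly (vanishing_poly S x) z = (\<Prod>i\<in>J. z - x i) * (\<Prod>j\<in>S - J. z - x j)"
      unfolding poly_vanishing_poly using prod.subset_diff[OF J assms(1)] by (simp add: mult.commute)
    have "z \<notin> x ` J" "z \<notin> x ` (S - J)"
      using J assms(3) by auto
    then show ?thesis
      unfolding V prod_cross_ratio_clear_left[OF \<open>z \<notin> x ` J\<close>, symmetric]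
        prod_cross_ratio_clear_right[OF \<open>z \<notin> x ` (S - J)\<close>, symmetric]
      by (simp add: algebra_simps)
  qed
  show ?thesis
    unfolding poly_insertion_numerator expand sum_distrib_left
    by (rule sum.cong[OF refl], rule summand) simp
qed

text \<open>The residues at \<open>z = x j\<close> cancel in pairs: the summand for \<open>K\<close> against
  the one for \<open>insert j K\<close>.\<close>

lemma poly_insertion_numerator_root:
  assumes "finite S" "inj_on x S" "j \<in> S"
  shows "poly (insertion_numerator u q S x t) (x j) = 0"
proof -
  define R where "R = S - {j}"
  have S: "S = insert j R" "finite R" "j \<notin> R" "x j \<notin> x ` R"
    using assms unfolding R_def inj_on_def by auto
  let ?summand = "\<lambda>J. cleared_term u q S J x t *
     ((\<Prod>i\<in>J. x j - t * x i) * (\<Prod>l\<in>S - J. x j - x l) * (1 - q * x j)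
      - u * t ^ card J * (\<Prod>l\<in>S - J. t * x j - x l) * (\<Prod>i\<in>J. x j - x i) * (1 - x j))"
  have "?summand K + ?summand (insert j K) = 0" if K: "K \<subseteq> R" for K
  proof -
    have K': "finite K" "j \<notin> K" "x j \<notin> x ` K" "x j \<notin> x ` (R - K)"
      using K S finite_subset by auto
    have diff: "S - K = insert j (R - K)" "S - insert j K = R - K"
      using K S by auto
    have summand_K: "?summand K = - cleared_term u q R K x t * (\<Prod>i\<in>K. (t * x i - x j) / (x i - x j))
        * (\<Prod>i\<in>K. x j - x i) * (1 - q * x j) * u * t ^ card K * (t * x j - x j)
        * (\<Prod>l\<in>R - K. t * x j - x l) * (1 - x j)"
      using S(2,3) by (simp add: cleared_term_insert_notin[OF S(2,3) K, folded S(1)] diff(1) algebra_simps)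
    have summand_jK: "?summand (insert j K) = - cleared_term u q R K x t * u * t ^ card K
        * (\<Prod>l\<in>R - K. (t * x j - x l) / (x j - x l)) * (\<Prod>l\<in>R - K. x j - x l) * (1 - x j)
        * (x j - t * x j) * (\<Prod>i\<in>K. x j - t * x i) * (1 - q * x j)"
      using K'(1,2) by (simp add: cleared_term_insert_in[OF S(2,3) K, folded S(1)] diff(2) algebra_simps)
    show ?thesis
      unfolding summand_K summand_jK
      unfolding prod_cross_ratio_clear_left[OF K'(3), symmetric]
        prod_cross_ratio_clear_right[OF K'(4), symmetric]
      by (simp add: algebra_simps)
  qed
  then show ?thesis
    unfolding poly_insertion_numerator S(1) sum_Pow_insert[OF S(2,3)]
    by (simp add: S(1)[symmetric])
qed

lemma degree_coeff_insertion_summand: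
  assumes "finite S" "J \<subseteq> S"
  shows "degree (insertion_summand u q S J x t) \<le> card S + 1"
    and "coeff (insertion_summand u q S J x t) (card S + 1) = u * t ^ card S - q"
proof -
  let ?P1 = "(\<Prod>i\<in>J. [:- (t * x i), 1:]) * (\<Prod>j\<in>S - J. [:- x j, 1:])"
  let ?P2 = "(\<Prod>j\<in>S - J. [:- x j, t:]) * (\<Prod>i\<in>J. [:- x i, 1:])"
  note split = degree_coeff_prod_linear_split[OF assms]
  have P1: "degree ?P1 \<le> card S" "coeff ?P1 (card S) = 1"
    using split[of "\<lambda>i. [:- (t * x i), 1:]" "\<lambda>j. [:- x j, 1:]"] by simp_all
  have P2: "degree ?P2 \<le> card S" "coeff ?P2 (card S) = t ^ card (S - J)"
    using split[of "\<lambda>i. [:- x i, 1:]" "\<lambda>j. [:- x j, t:]"] by (simp_all add: mult.commute)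
  have lin: "degree [:1, - q:] \<le> 1" "degree [:1, - 1 :: 'a:] \<le> 1"
    by simp_all
  have "degree (?P1 * [:1, - q:]) \<le> card S + 1"
    using P1(1) lin(1) degree_mult_le[of ?P1 "[:1, - q:]"] by linarith
  moreover have "degree (?P2 * [:1, - 1:]) \<le> card S + 1"
    using P2(1) lin(2) degree_mult_le[of ?P2 "[:1, - 1:]"] by linarith
  ultimately show "degree (insertion_summand u q S J x t) \<le> card S + 1"
    unfolding insertion_summand_def by (intro degree_diff_le order_trans[OF degree_smult_le])
  have "t ^ card J * t ^ card (S - J) = t ^ card S"
    using assms by (simp add: card_Diff_subset card_mono finite_subset flip: power_add)
  then show "coeff (insertion_summand u q S J x t) (card S + 1) = u * t ^ card S - q"
    unfolding insertion_summand_def coeff_diff coeff_smult coeff_mult_at_degree_bounds[OF P1(1) lin(1)]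
      coeff_mult_at_degree_bounds[OF P2(1) lin(2)] P1(2) P2(2) by (simp add: mult.assoc)
qed

lemma degree_coeff_insertion_numerator:
  assumes "finite S"
  shows "degree (insertion_numerator u q S x t) \<le> card S + 1"
    and "coeff (insertion_numerator u q S x t) (card S + 1) = (u * t ^ card S - q) * cleared_sum u q S x t"
proof -
  have "degree (smult (cleared_term u q S J x t) (insertion_summand u q S J x t)) \<le> card S + 1"
    if "J \<in> Pow S" for J
    using that assms order_trans[OF degree_smult_le degree_coeff_insertion_summand(1)] by blast
  then show "degree (insertion_numerator u q S x t) \<le> card S + 1"
    unfolding insertion_numerator_def using assms by (intro degree_sum_le) auto
  show "coeff (insertion_numerator u q S x t) (card S + 1) = (u * t ^ card S - q) * cleared_sum u q S x t"
    unfolding insertion_numerator_def cleared_sum_def coeff_sum coeff_smult sum_distrib_left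
    using assms by (intro sum.cong refl) (metis PowD degree_coeff_insertion_summand(2) mult.commute)
qed

lemma cleared_sum_insert_affine:
  assumes S: "finite S" "k \<notin> S" "inj_on x S" "0 \<notin> x ` S" and z: "z \<notin> x ` S"
  shows "cleared_sum u q (insert k S) (x(k := z)) t
           = (u * t ^ card S - q) * cleared_sum u q S x t * z + (1 - u) * cleared_sum (u * t) q S x t"
proof -
  let ?N = "insertion_numerator u q S x t" and ?V = "vanishing_poly S x"
  have "cleared_sum u q (insert k S) (x(k := 0)) t = (1 - u) * cleared_sum (u * t) q S (x(k := 0)) t"
    using S by (intro cleared_sum_insert_zero) auto
  also have "\<dots> = (1 - u) * cleared_sum (u * t) q S x t"
    using S(2) by (metis cleared_sum_cong fun_upd_other)
  finally have "poly ?N 0 = poly ?V 0 * ((1 - u) * cleared_sum (u * t) q S x t)"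
    using S by (simp add: poly_insertion_numerator_eq)
  then have N0: "poly ?N 0 / poly ?V 0 = (1 - u) * cleared_sum (u * t) q S x t"
    using S vanishing_poly_nonzero[of S 0 x] by simp
  have "poly ?V z * cleared_sum u q (insert k S) (x(k := z)) t = poly ?N z"
    using S z by (simp add: poly_insertion_numerator_eq)
  also have "\<dots> = poly ?V z * (coeff ?N (card S + 1) * z + poly ?N 0 / poly ?V 0)"
    using S degree_coeff_insertion_numerator(1) poly_insertion_numerator_root
    by (intro poly_eq_vanishing_poly_mult_affine) auto
  also have "\<dots> = poly ?V z * ((u * t ^ card S - q) * cleared_sum u q S x t * z
                                 + (1 - u) * cleared_sum (u * t) q S x t)"
    by (simp only: N0 degree_coeff_insertion_numerator(2)[OF S(1)])
  finally show ?thesis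
    using vanishing_poly_nonzero[OF S(1) z] by simp
qed

text \<open>The value at \<open>0\<close> of the numerator is only accessible when no other \<open>x j\<close> vanishes,
  so the variable to be removed is a zero of \<open>x\<close> if there is one.\<close>

lemma cleared_sum_remove:
  assumes "finite S" "S \<noteq> {}" "inj_on x S"
  obtains k where "k \<in> S"
    "\<And>u q. cleared_sum u q S x t = (u * t ^ card (S - {k}) - q) * cleared_sum u q (S - {k}) x t * x k
             + (1 - u) * cleared_sum (u * t) q (S - {k}) x t"
proof -
  obtain k where k: "k \<in> S" "x k = 0 \<or> 0 \<notin> x ` (S - {k})"
  proof (cases "\<exists>k\<in>S. x k = 0")
    case False
    with assms(2) that show ?thesis by fastforce
  qed (use that in blast)
  have R: "finite (S - {k})" "k \<notin> S - {k}" "inj_on x (S - {k})" "x k \<notin> x ` (S - {k})"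
    using assms k(1) by (auto simp: inj_on_def)
  have S: "S = insert k (S - {k})"
    using k(1) by auto
  show thesis
  proof (rule that[OF k(1)])
    fix u q
    show "cleared_sum u q S x t = (u * t ^ card (S - {k}) - q) * cleared_sum u q (S - {k}) x t * x k
             + (1 - u) * cleared_sum (u * t) q (S - {k}) x t"
    proof (cases "x k = 0")
      case True
      then have "\<forall>j\<in>S - {k}. x j \<noteq> 0"
        using R(4) by force
      then have "cleared_sum u q (insert k (S - {k})) x t = (1 - u) * cleared_sum (u * t) q (S - {k}) x t"
        using R(1,2) True by (intro cleared_sum_insert_zero)
      then show ?thesis
        using True S by simp
    next
      case False
      then show ?thesis
        using cleared_sum_insert_affine[OF R(1-3) _ R(4), of u q t] k(2) S by simp
    qed
  qed
qed

lemma cleared_sum_geometric: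
  assumes "finite S" "inj_on x S" "S \<noteq> {} \<Longrightarrow> q = s * t ^ (card S - 1)"
  shows "cleared_sum s q S x t = (\<Prod>j<card S. 1 - s * t ^ j)"
  using assms
proof (induction "card S" arbitrary: S s)
  case 0
  then show ?case by simp
next
  case (Suc n)
  then have S: "finite S" "S \<noteq> {}" "inj_on x S"
    by auto
  with Suc have q: "q = s * t ^ n"
    by (metis diff_Suc_1)
  obtain k where k: "k \<in> S" and step:
    "\<And>u q. cleared_sum u q S x t = (u * t ^ card (S - {k}) - q) * cleared_sum u q (S - {k}) x t * x k
             + (1 - u) * cleared_sum (u * t) q (S - {k}) x t"
    using cleared_sum_remove[OF S] by blast
  have card: "card (S - {k}) = n"
    using Suc.hyps(2) k S(1) by simp
  have IH: "cleared_sum (s * t) q (S - {k}) x t = (\<Prod>j<n. 1 - s * t * t ^ j)"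
  proof (rule Suc.hyps(1)[of "S - {k}" "s * t", unfolded card])
    show "S - {k} \<noteq> {} \<Longrightarrow> q = s * t * t ^ (n - 1)"
      using q card S(1) by (cases n) (auto simp: mult.assoc)
  qed (use S in \<open>auto intro: inj_on_subset\<close>)
  have "cleared_sum s q S x t = (1 - s) * (\<Prod>j<n. 1 - s * t * t ^ j)"
    using step[of s q] q card IH by simp
  also have "\<dots> = (\<Prod>j<Suc n. 1 - s * t ^ j)"
    unfolding prod.lessThan_Suc_shift by (simp add: mult.assoc)
  finally show ?case
    using Suc.hyps(2) by simp
qed

lemma cleared_sum_at_one:
  assumes "finite S" "inj_on x S"
  shows "cleared_sum 1 q S x t = (\<Prod>i\<in>S. x i) * (\<Prod>j<card S. t ^ j - q)"
  using assms
proof (induction "card S" arbitrary: S)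
  case 0
  then show ?case by simp
next
  case (Suc n)
  then have S: "finite S" "S \<noteq> {}" "inj_on x S"
    by auto
  obtain k where k: "k \<in> S" and step:
    "\<And>u q. cleared_sum u q S x t = (u * t ^ card (S - {k}) - q) * cleared_sum u q (S - {k}) x t * x k
             + (1 - u) * cleared_sum (u * t) q (S - {k}) x t"
    using cleared_sum_remove[OF S] by blast
  have card: "card (S - {k}) = n"
    using Suc.hyps(2) k S(1) by simp
  have IH: "cleared_sum 1 q (S - {k}) x t = (\<Prod>i\<in>S - {k}. x i) * (\<Prod>j<n. t ^ j - q)"
    using Suc.hyps(1)[of "S - {k}"] card S by (auto intro: inj_on_subset)
  have "cleared_sum 1 q S x t = (t ^ n - q) * ((\<Prod>i\<in>S - {k}. x i) * (\<Prod>j<n. t ^ j - q)) * x k"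
    using step[of 1 q] card IH by simp
  also have "\<dots> = (\<Prod>i\<in>S. x i) * (\<Prod>j<Suc n. t ^ j - q)"
    using prod.remove[OF S(1) k, of x] by (simp add: ac_simps)
  finally show ?case
    using Suc.hyps(2) by simp
qed

lemma prod_principal_ratio_telescope:
  fixes a t :: "'a::field"
  assumes "\<forall>j\<in>{1..n}. 1 - t * a * t ^ (j - 1) \<noteq> 0"
  shows "(\<Prod>j\<in>{1..n}. (1 - a * t ^ (j - 1)) / (1 - t * a * t ^ (j - 1))) * (1 - t ^ n * a) = 1 - a"
  using assms
proof (induction n)
  case (Suc n)
  have "1 - t * a * t ^ n \<noteq> 0"
    using Suc.prems[rule_format, of "Suc n"] by simp
  then have last: "(1 - a * t ^ n) / (1 - t * a * t ^ n) * (1 - t ^ Suc n * a) = 1 - t ^ n * a"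
    by (simp add: field_simps)
  have IH: "(\<Prod>j\<in>{1..n}. (1 - a * t ^ (j - 1)) / (1 - t * a * t ^ (j - 1))) * (1 - t ^ n * a) = 1 - a"
    using Suc by simp
  have "(\<Prod>j\<in>{1..Suc n}. (1 - a * t ^ (j - 1)) / (1 - t * a * t ^ (j - 1)))
      = (\<Prod>j\<in>{1..n}. (1 - a * t ^ (j - 1)) / (1 - t * a * t ^ (j - 1)))
        * ((1 - a * t ^ n) / (1 - t * a * t ^ n))"
    by (simp add: prod.cl_ivl_Suc)
  then show ?case
    using last IH by (simp only: mult.assoc)
qed simp

lemma F_principal_mult_eq_cleared_sum:
  fixes x :: "nat \<Rightarrow> 'a::field"
  assumes "\<forall>i\<in>{1..m}. \<forall>j\<in>{1..n}. 1 - t * x i * t ^ (j - 1) \<noteq> 0"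
  shows "F u m x n (\<lambda>j. t ^ (j - 1)) t * (\<Prod>i\<in>{1..m}. 1 - t ^ n * x i)
           = cleared_sum u (t ^ n) {1..m} x t"
  unfolding F_def cleared_sum_def sum_distrib_right
proof (intro sum.cong refl)
  fix I assume "I \<in> Pow {1..m}"
  then have I: "I \<subseteq> {1..m}" by simp
  have split: "(\<Prod>i\<in>{1..m}. 1 - t ^ n * x i)
      = (\<Prod>i\<in>I. 1 - t ^ n * x i) * (\<Prod>i\<in>{1..m} - I. 1 - t ^ n * x i)"
    using prod.subset_diff[OF I] by (simp add: mult.commute)
  have "(\<Prod>i\<in>I. \<Prod>j\<in>{1..n}. (1 - x i * t ^ (j - 1)) / (1 - t * x i * t ^ (j - 1)))
        * (\<Prod>i\<in>{1..m}. 1 - t ^ n * x i)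
      = (\<Prod>i\<in>I. (\<Prod>j\<in>{1..n}. (1 - x i * t ^ (j - 1)) / (1 - t * x i * t ^ (j - 1)))
           * (1 - t ^ n * x i)) * (\<Prod>i\<in>{1..m} - I. 1 - t ^ n * x i)"
    unfolding split prod.distrib by (simp only: mult.assoc)
  also have "\<dots> = (\<Prod>i\<in>I. 1 - x i) * (\<Prod>i\<in>{1..m} - I. 1 - t ^ n * x i)"
    using I assms by (intro arg_cong2[where f = "(*)"] prod.cong refl prod_principal_ratio_telescope) auto
  finally show "(- u) ^ card I * t ^ (card I choose 2)
      * (\<Prod>i\<in>I. \<Prod>j\<in>{1..m} - I. (t * x i - x j) / (x i - x j))
      * (\<Prod>i\<in>I. \<Prod>j\<in>{1..n}. (1 - x i * t ^ (j - 1)) / (1 - t * x i * t ^ (j - 1)))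
      * (\<Prod>i\<in>{1..m}. 1 - t ^ n * x i) = cleared_term u (t ^ n) {1..m} I x t"
    unfolding cleared_term_def cross_factor_def by (simp only: mult.assoc)
qed

lemma prod_one_minus_shifted_powers:
  fixes t :: "'a::comm_ring_1"
  assumes "m \<le> n"
  shows "(\<Prod>j<m. 1 - t ^ (n - m + 1) * t ^ j) = (\<Prod>i=1..m. 1 - t ^ (i + n - m))"
proof -
  have "(\<Prod>i=1..m. 1 - t ^ (i + n - m)) = (\<Prod>j<m. 1 - t ^ (Suc j + n - m))"
    using prod.atLeast1_atMost_eq[of "\<lambda>i. 1 - t ^ (i + n - m)" m] by simp
  also have "\<dots> = (\<Prod>j<m. 1 - t ^ (n - m + 1) * t ^ j)"
  proof (rule prod.cong[OF refl])
    fix j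
    have "Suc j + n - m = (n - m + 1) + j"
      using assms by simp
    then show "1 - t ^ (Suc j + n - m) = 1 - t ^ (n - m + 1) * t ^ j"
      by (simp only: power_add)
  qed
  finally show ?thesis ..
qed

lemma prod_power_diff_power:
  fixes t :: "'a::comm_ring_1"
  assumes "m \<le> n"
  shows "(\<Prod>j<m. t ^ j - t ^ n) = t ^ (m choose 2) * (\<Prod>i=1..m. 1 - t ^ (i + n - m))"
proof -
  have "(\<Prod>j<m. t ^ j - t ^ n) = (\<Prod>i=Suc 0..m. t ^ (m - i) - t ^ n)"
    using prod.atLeastLessThan_rev_at_least_Suc_atMost[of "\<lambda>j. t ^ j - t ^ n" 0 m]
    by (simp add: atLeast0LessThan)
  also have "\<dots> = (\<Prod>i=Suc 0..m. t ^ (m - i) * (1 - t ^ (i + n - m)))"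
    using assms by (intro prod.cong refl) (simp add: algebra_simps power_add[symmetric])
  also have "\<dots> = t ^ (\<Sum>i=Suc 0..m. m - i) * (\<Prod>i=Suc 0..m. 1 - t ^ (i + n - m))"
    by (simp add: prod.distrib power_sum)
  also have "(\<Sum>i=Suc 0..m. m - i) = m choose 2"
    using sum.atLeastLessThan_rev_at_least_Suc_atMost[of "\<lambda>j. j" 0 m]
    by (simp add: Sum_Ico_nat choose_two)
  finally show ?thesis by simp
qed

lemma F_principal_at_shifted_power:
  fixes x :: "nat \<Rightarrow> 'a::field"
  assumes "m \<le> n" "inj_on x {1..m}"
    and "\<forall>i\<in>{1..m}. \<forall>j\<in>{1..n}. 1 - t * x i * t ^ (j - 1) \<noteq> 0"
  shows "F (t ^ (n - m + 1)) m x n (\<lambda>j. t ^ (j - 1)) t * (\<Prod>i=1..m. 1 - t ^ n * x i)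
           = (\<Prod>i=1..m. 1 - t ^ (i + n - m))"
proof -
  have "{1..m} \<noteq> {} \<Longrightarrow> t ^ n = t ^ (n - m + 1) * t ^ (card {1..m} - 1)"
    using assms(1) by (simp only: power_add[symmetric]) simp
  then have "cleared_sum (t ^ (n - m + 1)) (t ^ n) {1..m} x t
      = (\<Prod>j<card {1..m}. 1 - t ^ (n - m + 1) * t ^ j)"
    by (rule cleared_sum_geometric[OF finite_atLeastAtMost assms(2)])
  then show ?thesis
    unfolding F_principal_mult_eq_cleared_sum[OF assms(3)]
    by (simp only: card_atLeastAtMost diff_Suc_1 prod_one_minus_shifted_powers[OF assms(1)])
qed

lemma F_principal_at_one:
  fixes x :: "nat \<Rightarrow> 'a::field"
  assumes "m \<le> n" "inj_on x {1..m}"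
    and "\<forall>i\<in>{1..m}. \<forall>j\<in>{1..n}. 1 - t * x i * t ^ (j - 1) \<noteq> 0"
  shows "F 1 m x n (\<lambda>j. t ^ (j - 1)) t * (\<Prod>i=1..m. 1 - t ^ n * x i)
           = (\<Prod>i=1..m. x i) * (t ^ (m choose 2) * (\<Prod>i=1..m. 1 - t ^ (i + n - m)))"
  unfolding F_principal_mult_eq_cleared_sum[OF assms(3)]
  by (simp only: cleared_sum_at_one[OF finite_atLeastAtMost assms(2)] card_atLeastAtMost diff_Suc_1
      prod_power_diff_power[OF assms(1)])

theorem corollary3p3:
  fixes x :: "nat \<Rightarrow> 'a::field" and t :: 'a and m n :: nat
  assumes "m \<le> n"
    and "\<forall>i\<in>{1..m}. \<forall>j\<in>{1..m}. i \<noteq> j \<longrightarrow> x i \<noteq> x j"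
    and "\<forall>i\<in>{1..m}. \<forall>j\<in>{1..n}. 1 - t * x i * t ^ (j - 1) \<noteq> 0"
  shows "F (t ^ (n - m + 1)) m x n (\<lambda>j. t ^ (j - 1)) t
           = (\<Prod>i=1..m. (1 - t ^ (i + n - m)) / (1 - t ^ n * x i))
       \<and> F 1 m x n (\<lambda>j. t ^ (j - 1)) t
           = t ^ (m choose 2) * (\<Prod>i=1..m. x i)
             * (\<Prod>i=1..m. (1 - t ^ (i + n - m)) / (1 - t ^ n * x i))"
proof -
  have inj: "inj_on x {1..m}"
    using assms(2) by (auto intro: inj_onI)
  have "1 - t * x i * t ^ (n - 1) \<noteq> 0" if "i \<in> {1..m}" for i
    using assms(1,3) that by auto
  then have "1 - t ^ n * x i \<noteq> 0" if "i \<in> {1..m}" for i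
    using assms(1) that by (cases n) (simp_all add: ac_simps)
  then have D: "(\<Prod>i=1..m. 1 - t ^ n * x i) \<noteq> 0"
    by simp
  show ?thesis
    using F_principal_at_shifted_power[OF assms(1) inj assms(3)]
      F_principal_at_one[OF assms(1) inj assms(3)] D
    by (simp add: prod_dividef field_simps)
qed

end
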